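(* Let $w \in S_n$, and form a table $\mathcal{T}(w)$ whose rows are indexed by the braid classes of $w$ and whose columns are indexed by the commutation classes of $w$, placing each reduced word $\mathbf{u}\in R(w)$ in the cell whose row is the braid class containing $\mathbf{u}$ and whose column is the commutation class containing $\mathbf{u}$. Then each cell of $\mathcal{T}(w)$ contains at most one reduced word; equivalently, every braid class and every commutation class of $w$ intersect in at most one element.
   Context: $S_n$ is generated by the adjacent transpositions $s_1,\dots,s_{n-1}$. A reduced word for $w$ is a word $i_1\cdots i_k$ with $w=s_{i_1}\cdots s_{i_k}$ and $k$ minimal; $R(w)$ is the set of reduced words. A braid move replaces a factor (consecutive letters) $i(i+1)i$ by $(i+1)i(i+1)$ or vice versa; a commutation move replaces a factor $ij$ with $|i-j|>1$ by $ji$. Braid classes (resp. commutation classes) of $w$ are the equivalence classes of $R(w)$ under sequences of braid moves (resp. commutation moves). *)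

theory Defs
  imports "HOL-Combinatorics.Combinatorics"
begin

definition adj_transp :: "nat \<Rightarrow> nat \<Rightarrow> nat" where
  "adj_transp i = Transposition.transpose i (Suc i)"

definition word_perm :: "nat list \<Rightarrow> (nat \<Rightarrow> nat)" where
  "word_perm ws = foldr (\<lambda>i f. adj_transp i \<circ> f) ws id"

definition is_word :: "nat \<Rightarrow> nat list \<Rightarrow> bool" where
  "is_word n ws \<longleftrightarrow> set ws \<subseteq> {1..<n}"

definition reduced_words :: "nat \<Rightarrow> (nat \<Rightarrow> nat) \<Rightarrow> nat list set" where
  "reduced_words n w = {ws. is_word n ws \<and> word_perm ws = w \<and>
       (\<forall>vs. is_word n vs \<and> word_perm vs = w \<longrightarrow> length ws \<le> length vs)}"

definition braid_move :: "nat list \<Rightarrow> nat list \<Rightarrow> bool" where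
  "braid_move u v \<longleftrightarrow> (\<exists>a b i.
      (u = a @ [i, Suc i, i] @ b \<and> v = a @ [Suc i, i, Suc i] @ b) \<or>
      (u = a @ [Suc i, i, Suc i] @ b \<and> v = a @ [i, Suc i, i] @ b))"

definition comm_move :: "nat list \<Rightarrow> nat list \<Rightarrow> bool" where
  "comm_move u v \<longleftrightarrow> (\<exists>a b i j. (Suc i < j \<or> Suc j < i) \<and>
      u = a @ [i, j] @ b \<and> v = a @ [j, i] @ b)"

definition braid_equiv :: "nat list \<Rightarrow> nat list \<Rightarrow> bool" where
  "braid_equiv = braid_move\<^sup>*\<^sup>*"

definition comm_equiv :: "nat list \<Rightarrow> nat list \<Rightarrow> bool" where
  "comm_equiv = comm_move\<^sup>*\<^sup>*"

end

theory Submission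
  imports Defs
begin

text \<open>Reading a word from left to right, the letter i exchanges the values in positions i and
  i+1 of the current one-line notation; record these values as a two-element set. This crossing
  sequence determines the word. A commutation move swaps two adjacent crossings that are disjoint,
  and a braid move reverses three consecutive crossings {a,b}, {a,c}, {b,c} that pairwise meet.
  Hence commutation moves preserve the relative order of any two intersecting crossings, braid
  moves that of any two disjoint ones, and a word reachable by both kinds of moves has the same
  crossing sequence, since a list is determined by its restrictions to all pairs of values.\<close>

fun crossings :: "(nat \<Rightarrow> nat) \<Rightarrow> nat list \<Rightarrow> nat set list" where
  "crossings f [] = []"
| "crossings f (i # ws) = {f i, f (Suc i)} # crossings (f \<circ> adj_transp i) ws"

lemma word_perm_Cons: "word_perm (i # ws) = adj_transp i \<circ> word_perm ws"
  by (simp add: word_perm_def)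

lemma word_perm_append: "word_perm (a @ b) = word_perm a \<circ> word_perm b"
  by (induction a) (simp_all add: word_perm_Cons word_perm_def comp_assoc)

lemma inj_word_perm: "inj (word_perm ws)"
proof (induction ws)
  case Nil
  then show ?case by (simp add: word_perm_def)
next
  case (Cons i ws)
  then show ?case
    unfolding word_perm_Cons adj_transp_def by (rule inj_compose[OF inj_transpose])
qed

lemma crossings_append:
  "crossings f (a @ b) = crossings f a @ crossings (f \<circ> word_perm a) b"
  by (induction a arbitrary: f) (simp_all add: word_perm_Cons comp_assoc, simp add: word_perm_def)

lemma crossings_inj:
  assumes "inj f" and "crossings f u = crossings f v"
  shows "u = v"
  using assms
proof (induction u arbitrary: f v)
  case Nil
  then show ?case by (cases v) auto
next
  case (Cons i u)
  then obtain j v' where v: "v = j # v'" by (cases v) auto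
  with Cons.prems have "{f i, f (Suc i)} = {f j, f (Suc j)}" by simp
  with \<open>inj f\<close> have "i = j" by (auto simp: doubleton_eq_iff inj_eq)
  moreover have "inj (f \<circ> adj_transp i)"
    using \<open>inj f\<close> by (simp add: adj_transp_def inj_transpose inj_compose)
  ultimately show ?case using Cons v by simp
qed

lemma list_eq_if_restrictions_to_pairs_eq:
  assumes "\<And>e e'. filter (\<lambda>x. x \<in> {e, e'}) xs = filter (\<lambda>x. x \<in> {e, e'}) ys"
  shows "xs = ys"
  using assms
proof (induction xs arbitrary: ys)
  case Nil
  then show ?case by (cases ys) (auto dest: meta_spec[of _ "hd ys"])
next
  case (Cons a xs)
  then obtain b ys' where ys: "ys = b # ys'"
    by (cases ys) (auto dest: meta_spec[of _ a])
  have "a = b"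
    using Cons.prems[of a b] ys by (auto split: if_splits)
  moreover have "xs = ys'"
  proof (rule Cons.IH)
    fix e e'
    show "filter (\<lambda>x. x \<in> {e, e'}) xs = filter (\<lambda>x. x \<in> {e, e'}) ys'"
      using Cons.prems[of e e'] ys \<open>a = b\<close> by (auto split: if_splits)
  qed
  ultimately show ?case using ys by simp
qed

lemma filter_infix_rev:
  assumes "\<forall>x \<in> set m. \<forall>y \<in> set m. P x \<longrightarrow> P y \<longrightarrow> x = y"
  shows "filter P (a @ m @ b) = filter P (a @ rev m @ b)"
proof -
  have "y = hd (filter P m)" if "y \<in> set (filter P m)" for y
  proof -
    from that have "hd (filter P m) \<in> set (filter P m)"
      by (cases "filter P m") auto
    with that assms show ?thesis by auto
  qed
  then have "replicate (length (filter P m)) (hd (filter P m)) = filter P m"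
    by (intro replicate_length_same) blast
  then have "filter P m = filter P (rev m)"
    by (metis rev_filter rev_replicate)
  then show ?thesis by simp
qed

lemma crossings_restriction_replace_infix:
  assumes "word_perm m' = word_perm m"
    and "crossings (f \<circ> word_perm a) m' = rev (crossings (f \<circ> word_perm a) m)"
    and "\<forall>x \<in> set (crossings (f \<circ> word_perm a) m). \<forall>y \<in> set (crossings (f \<circ> word_perm a) m).
           P x \<longrightarrow> P y \<longrightarrow> x = y"
  shows "filter P (crossings f (a @ m @ b)) = filter P (crossings f (a @ m' @ b))"
  using assms filter_infix_rev[OF assms(3)]
  by (simp add: crossings_append word_perm_append comp_assoc)

lemma adj_transp_commute:
  assumes "Suc i < j \<or> Suc j < i"
  shows "adj_transp i \<circ> adj_transp j = adj_transp j \<circ> adj_transp i"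
  using assms unfolding adj_transp_def by (intro swap_id_independent) auto

lemma adj_transp_braid:
  "adj_transp i \<circ> adj_transp (Suc i) \<circ> adj_transp i
     = adj_transp (Suc i) \<circ> adj_transp i \<circ> adj_transp (Suc i)"
  by (simp add: fun_eq_iff adj_transp_def Transposition.transpose_def)

lemma comm_move_restriction:
  assumes "inj f" and "comm_move u v" and "e \<inter> e' \<noteq> {}"
  shows "filter (\<lambda>x. x \<in> {e, e'}) (crossings f u) = filter (\<lambda>x. x \<in> {e, e'}) (crossings f v)"
proof -
  obtain a b i j where far: "Suc i < j \<or> Suc j < i"
    and u: "u = a @ [i, j] @ b" and v: "v = a @ [j, i] @ b"
    using assms(2) unfolding comm_move_def by blast
  define g where "g = f \<circ> word_perm a"
  define A where "A = {g i, g (Suc i)}"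
  define B where "B = {g j, g (Suc j)}"
  have "inj g"
    using assms(1) inj_word_perm by (simp add: g_def inj_compose)
  then have disjoint: "A \<inter> B = {}"
    using far by (auto simp: A_def B_def inj_eq)
  have fixed_points: "adj_transp i j = j" "adj_transp i (Suc j) = Suc j"
    "adj_transp j i = i" "adj_transp j (Suc i) = Suc i"
    using far by (auto simp: adj_transp_def Transposition.transpose_def)
  then have crossings_ij: "crossings g [i, j] = [A, B]"
    and crossings_ji: "crossings g [j, i] = [B, A]"
    by (simp_all add: A_def B_def)
  show ?thesis
    unfolding u v
  proof (rule crossings_restriction_replace_infix)
    show "word_perm [j, i] = word_perm [i, j]"
      using adj_transp_commute[OF far] by (simp add: word_perm_def)
    show "crossings (f \<circ> word_perm a) [j, i] = rev (crossings (f \<circ> word_perm a) [i, j])"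
      unfolding g_def[symmetric] crossings_ij crossings_ji by simp
    show "\<forall>x \<in> set (crossings (f \<circ> word_perm a) [i, j]).
        \<forall>y \<in> set (crossings (f \<circ> word_perm a) [i, j]).
          x \<in> {e, e'} \<longrightarrow> y \<in> {e, e'} \<longrightarrow> x = y"
      unfolding g_def[symmetric] crossings_ij using disjoint assms(3) by auto
  qed
qed

lemma braid_move_restriction:
  assumes "braid_move u v" and "e \<inter> e' = {}"
  shows "filter (\<lambda>x. x \<in> {e, e'}) (crossings f u) = filter (\<lambda>x. x \<in> {e, e'}) (crossings f v)"
proof -
  have replace: "filter (\<lambda>x. x \<in> {e, e'}) (crossings f (a @ [i, Suc i, i] @ b))
      = filter (\<lambda>x. x \<in> {e, e'}) (crossings f (a @ [Suc i, i, Suc i] @ b))" for a b i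
  proof (rule crossings_restriction_replace_infix)
    define g where "g = f \<circ> word_perm a"
    define X where "X = {g i, g (Suc i)}"
    define Y where "Y = {g i, g (Suc (Suc i))}"
    define Z where "Z = {g (Suc i), g (Suc (Suc i))}"
    have pairwise_meet: "X \<inter> Y \<noteq> {}" "X \<inter> Z \<noteq> {}" "Y \<inter> Z \<noteq> {}"
      by (auto simp: X_def Y_def Z_def)
    have crossings_low: "crossings g [i, Suc i, i] = [X, Y, Z]"
      and crossings_high: "crossings g [Suc i, i, Suc i] = [Z, Y, X]"
      by (simp_all add: X_def Y_def Z_def adj_transp_def Transposition.transpose_def insert_commute)
    show "word_perm [Suc i, i, Suc i] = word_perm [i, Suc i, i]"
      using adj_transp_braid[of i] by (simp add: word_perm_def comp_assoc)
    show "crossings (f \<circ> word_perm a) [Suc i, i, Suc i] = rev (crossings (f \<circ> word_perm a) [i, Suc i, i])"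
      unfolding g_def[symmetric] crossings_low crossings_high by simp
    show "\<forall>x \<in> set (crossings (f \<circ> word_perm a) [i, Suc i, i]).
        \<forall>y \<in> set (crossings (f \<circ> word_perm a) [i, Suc i, i]).
          x \<in> {e, e'} \<longrightarrow> y \<in> {e, e'} \<longrightarrow> x = y"
      unfolding g_def[symmetric] crossings_low using pairwise_meet assms(2) by auto
  qed
  from assms(1) obtain a b i where
    "(u = a @ [i, Suc i, i] @ b \<and> v = a @ [Suc i, i, Suc i] @ b) \<or>
     (u = a @ [Suc i, i, Suc i] @ b \<and> v = a @ [i, Suc i, i] @ b)"
    unfolding braid_move_def by blast
  then show ?thesis using replace[of a i b] by auto
qed

lemma braid_equiv_restriction:
  assumes "braid_equiv u v" and "e \<inter> e' = {}"
  shows "filter (\<lambda>x. x \<in> {e, e'}) (crossings f u) = filter (\<lambda>x. x \<in> {e, e'}) (crossings f v)"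
  using assms(1) unfolding braid_equiv_def
proof (induction rule: rtranclp_induct)
  case (step y z)
  from step.IH braid_move_restriction[OF step.hyps(2) assms(2)] show ?case by (rule trans)
qed simp

lemma comm_equiv_restriction:
  assumes "inj f" and "comm_equiv u v" and "e \<inter> e' \<noteq> {}"
  shows "filter (\<lambda>x. x \<in> {e, e'}) (crossings f u) = filter (\<lambda>x. x \<in> {e, e'}) (crossings f v)"
  using assms(2) unfolding comm_equiv_def
proof (induction rule: rtranclp_induct)
  case (step y z)
  from step.IH comm_move_restriction[OF assms(1) step.hyps(2) assms(3)] show ?case by (rule trans)
qed simp

theorem corollary4p3:
  fixes n :: nat and w :: "nat \<Rightarrow> nat" and u v :: "nat list"
  assumes "w permutes {1..n}"
    and "u \<in> reduced_words n w" and "v \<in> reduced_words n w"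
    and "braid_equiv u v" and "comm_equiv u v"
  shows "u = v"
proof -
  have "crossings id u = crossings id v"
  proof (rule list_eq_if_restrictions_to_pairs_eq)
    fix e e' :: "nat set"
    show "filter (\<lambda>x. x \<in> {e, e'}) (crossings id u) = filter (\<lambda>x. x \<in> {e, e'}) (crossings id v)"
    proof (cases "e \<inter> e' = {}")
      case True
      then show ?thesis by (rule braid_equiv_restriction[OF assms(4)])
    next
      case False
      then show ?thesis by (rule comm_equiv_restriction[OF inj_on_id assms(5)])
    qed
  qed
  then show ?thesis by (rule crossings_inj[OF inj_on_id])
qed

end
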